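(* Let $\Pi$ be a homogeneous Poisson point process in $\mathbb{R}^2$ of unit intensity. Let $A=(0,0)$, let $B$ be the point of $\Pi$ nearest to $A$ and $C$ the point of $\Pi$ second nearest to $A$. Let $a=\|B-C\|$. Then $a$ has density $\pi\,x\,\operatorname{erfc}\!\left(\sqrt{\pi}\,x/2\right)$ for $x>0$.
   Context: $\|\cdot\|$ is the Euclidean norm and $\operatorname{erfc}$ is the complementary error function. *)

theory Defs
  imports "HOL-Probability.Probability"
begin

definition erfc :: "real \<Rightarrow> real" where
  "erfc x = 2 / sqrt pi * (LBINT t:{x<..}. exp (- (t\<^sup>2)))"

definition unit_poisson_process :: "'a measure \<Rightarrow> ('a \<Rightarrow> (real^2) set) \<Rightarrow> bool" where
  "unit_poisson_process M X \<longleftrightarrow>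
     prob_space M \<and>
     (\<forall>\<omega>\<in>space M. \<forall>S. bounded S \<longrightarrow> finite (X \<omega> \<inter> S)) \<and>
     (\<forall>S \<in> sets borel. bounded S \<longrightarrow>
        (\<lambda>\<omega>. card (X \<omega> \<inter> S)) \<in> measurable M (count_space UNIV) \<and>
        (\<forall>k. measure M {\<omega> \<in> space M. card (X \<omega> \<inter> S) = k}
               = measure lborel S ^ k / fact k * exp (- measure lborel S))) \<and>
     (\<forall>\<S>. finite \<S> \<and> disjoint \<S> \<and> \<S> \<subseteq> sets borel \<and> (\<forall>S\<in>\<S>. bounded S) \<longrightarrow>
        prob_space.indep_vars M (\<lambda>_. count_space UNIV) (\<lambda>S \<omega>. card (X \<omega> \<inter> S)) \<S>)"

definition nearest_two :: "(real^2) set \<Rightarrow> real^2 \<Rightarrow> real^2 \<Rightarrow> bool" where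
  "nearest_two Y b c \<longleftrightarrow> b \<in> Y \<and> c \<in> Y \<and> b \<noteq> c \<and> norm b \<le> norm c \<and>
     (\<forall>p \<in> Y - {b, c}. norm c \<le> norm p)"

end

theory Submission
  imports Defs "HOL-Real_Asymp.Real_Asymp"
begin

text \<open>Almost surely the Poisson process has a unique nearest and a unique second nearest point,
  and the void probabilities of the process determine their joint law: \<open>(B, C)\<close> has density
  \<open>exp (- pi * norm c\<^sup>2)\<close> on \<open>{(b, c). norm b < norm c}\<close> (one point near \<open>b\<close>, one near
  \<open>c\<close>, none in the rest of the disc of radius \<open>norm c\<close>). Writing \<open>b = c + w\<close> and integrating out
  \<open>c\<close>, the density of \<open>w\<close> is the Gaussian mass of the half-plane of points nearer to \<open>- w\<close> than
  to the origin, i.e. \<open>erfc (sqrt pi * norm w / 2) / 2\<close>; polar coordinates contribute the factor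
  \<open>2 * pi * x\<close>.

  The void-probability argument only gives a lower bound for the law of \<open>(B, C)\<close> on rectangles,
  after discretising \<open>norm c\<close> into thin shells; as both sides are probability measures, the
  bound is an equality.\<close>

lemma measure_eqI_le_on_Times:
  fixes P Q :: "('a \<times> 'b) measure"
  assumes sets_P: "sets P = sets (M \<Otimes>\<^sub>M N)" and sets_Q: "sets Q = sets (M \<Otimes>\<^sub>M N)"
    and finite: "emeasure Q (space Q) \<noteq> \<infinity>" and mass: "emeasure P (space P) = emeasure Q (space Q)"
    and le: "\<And>A B. A \<in> sets M \<Longrightarrow> B \<in> sets N \<Longrightarrow> emeasure P (A \<times> B) \<le> emeasure Q (A \<times> B)"
  shows "P = Q"
proof -
  let ?\<Omega> = "space M \<times> space N"
  have space_P: "space P = ?\<Omega>" and space_Q: "space Q = ?\<Omega>"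
    using sets_eq_imp_space_eq[OF sets_P] sets_eq_imp_space_eq[OF sets_Q] by (simp_all add: space_pair_measure)
  have finite_P: "emeasure P S \<noteq> \<infinity>" and finite_Q: "emeasure Q S \<noteq> \<infinity>" for S
    using emeasure_space[of P S] emeasure_space[of Q S] mass finite by (auto simp: top_unique)
  have eq: "emeasure P (A \<times> B) = emeasure Q (A \<times> B)" if A: "A \<in> sets M" and B: "B \<in> sets N" for A B
  proof (rule antisym[OF le[OF A B]])
    define R where "R = (space M - A) \<times> space N \<union> A \<times> (space N - B)"
    have R: "R \<in> sets (M \<Otimes>\<^sub>M N)" and AB_eq: "?\<Omega> - R = A \<times> B"
      using A B sets.sets_into_space[OF A] sets.sets_into_space[OF B] by (auto simp: R_def)
    have "emeasure P R = emeasure P ((space M - A) \<times> space N) + emeasure P (A \<times> (space N - B))"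
      using A B sets_P by (auto simp: R_def intro!: plus_emeasure[symmetric])
    also have "\<dots> \<le> emeasure Q ((space M - A) \<times> space N) + emeasure Q (A \<times> (space N - B))"
      using A B by (intro add_mono le) auto
    also have "\<dots> = emeasure Q R"
      using A B sets_Q by (auto simp: R_def intro!: plus_emeasure)
    finally have "emeasure P R \<le> emeasure Q R" .
    have "emeasure Q (A \<times> B) = emeasure Q (space Q) - emeasure Q R"
      using R sets_Q finite_Q AB_eq space_Q by (metis emeasure_compl)
    also have "\<dots> \<le> emeasure P (space P) - emeasure P R"
      using mass \<open>emeasure P R \<le> emeasure Q R\<close> by (intro ennreal_minus_mono) auto
    also have "\<dots> = emeasure P (A \<times> B)"
      using R sets_P finite_P AB_eq space_P by (metis emeasure_compl)
    finally show "emeasure Q (A \<times> B) \<le> emeasure P (A \<times> B)" .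
  qed
  show ?thesis
  proof (rule measure_eqI_generator_eq[OF Int_stable_pair_measure_generator[of M N], where A="\<lambda>_. ?\<Omega>"])
    show "{a \<times> b |a b. a \<in> sets M \<and> b \<in> sets N} \<subseteq> Pow ?\<Omega>"
      by (blast dest: sets.sets_into_space)
    show "sets P = sigma_sets ?\<Omega> {a \<times> b |a b. a \<in> sets M \<and> b \<in> sets N}"
      "sets Q = sigma_sets ?\<Omega> {a \<times> b |a b. a \<in> sets M \<and> b \<in> sets N}"
      using sets_P sets_Q by (simp_all add: sets_pair_measure)
    show "range (\<lambda>_. ?\<Omega>) \<subseteq> {a \<times> b |a b. a \<in> sets M \<and> b \<in> sets N}"
      by blast
  qed (use eq finite_P in blast)+
qed

lemma emeasure_ball_real2: "0 \<le> r \<Longrightarrow> emeasure lborel (ball (c::real^2) r) = ennreal (pi * r\<^sup>2)"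
  using emeasure_ball[of r c] by (simp add: unit_ball_vol_2)

lemma emeasure_cball_real2: "0 \<le> r \<Longrightarrow> emeasure lborel (cball (c::real^2) r) = ennreal (pi * r\<^sup>2)"
  using emeasure_cball[of r c] by (simp add: unit_ball_vol_2)

lemma emeasure_lborel_bounded_eq_measure:
  fixes S :: "'a::euclidean_space set"
  shows "bounded S \<Longrightarrow> emeasure lborel S = ennreal (measure lborel S)"
  using emeasure_bounded_finite[of S] by (intro emeasure_eq_ennreal_measure) auto

lemma distr_norm_lborel_real2:
  "distr (lborel :: (real^2) measure) borel norm = density lborel (\<lambda>r. ennreal (2 * pi * r) * indicator {0..} r)"
  (is "?D = ?R")
proof (rule measure_eqI_generator_eq[where E="range atMost" and \<Omega>=UNIV and A="\<lambda>i. {..real i}"])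
  show "Int_stable (range (atMost :: real \<Rightarrow> real set))"
    by (auto simp: Int_stable_def)
  show "sets ?D = sigma_sets UNIV (range atMost)" "sets ?R = sigma_sets UNIV (range atMost)"
    by (simp_all add: borel_eq_atMost)
  show "(\<Union>i. {..real i}) = UNIV"
    by (auto simp: real_arch_simple)
  have cdf: "emeasure ?D {..b} = emeasure ?R {..b}" for b
  proof (cases "0 \<le> b")
    case True
    have "emeasure ?D {..b} = emeasure lborel (cball (0::real^2) b)"
      by (subst emeasure_distr) (auto intro!: arg_cong[where f="emeasure lborel"])
    also have "\<dots> = ennreal (pi * b\<^sup>2)"
      using True by (rule emeasure_cball_real2)
    also have "\<dots> = (\<integral>\<^sup>+x. ennreal (2 * pi * x) * indicator {0..b} x \<partial>lborel)"
      by (subst nn_integral_FTC_Icc[where F="\<lambda>x. pi * x\<^sup>2"])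
         (auto intro!: derivative_eq_intros simp: True)
    also have "\<dots> = emeasure ?R {..b}"
      by (subst emeasure_density) (auto intro!: nn_integral_cong split: split_indicator)
    finally show ?thesis .
  next
    case False
    then have "norm -` {..b} = ({} :: (real^2) set)"
      by auto (meson norm_ge_zero order_trans)
    then have "emeasure ?D {..b} = 0"
      by (subst emeasure_distr) auto
    also have "\<dots> = emeasure ?R {..b}"
      using False by (subst emeasure_density) (auto intro!: nn_integral_zero' split: split_indicator)
    finally show ?thesis .
  qed
  then show "X \<in> range atMost \<Longrightarrow> emeasure ?D X = emeasure ?R X" for X
    by auto
  show "emeasure ?D {..real i} \<noteq> \<infinity>" for i
  proof -
    have "norm -` {..real i} = cball (0::real^2) (real i)"
      by (auto simp: dist_norm)
    then show ?thesis
      using emeasure_cball_real2[of "real i" 0] by (subst emeasure_distr) auto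
  qed
qed auto

lemma nn_integral_norm_real2:
  assumes [measurable]: "\<phi> \<in> borel_measurable borel"
  shows "(\<integral>\<^sup>+w. \<phi> (norm w) \<partial>(lborel :: (real^2) measure))
    = (\<integral>\<^sup>+r. ennreal (2 * pi * r) * indicator {0..} r * \<phi> r \<partial>lborel)"
proof -
  have "(\<integral>\<^sup>+w. \<phi> (norm w) \<partial>(lborel :: (real^2) measure)) = (\<integral>\<^sup>+r. \<phi> r \<partial>distr lborel borel (norm :: real^2 \<Rightarrow> real))"
    by (subst nn_integral_distr) auto
  also have "\<dots> = (\<integral>\<^sup>+r. ennreal (2 * pi * r) * indicator {0..} r * \<phi> r \<partial>lborel)"
    unfolding distr_norm_lborel_real2 by (subst nn_integral_density) auto
  finally show ?thesis .
qed

lemma continuous_on_orthogonal_transformation: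
  fixes f :: "'a::euclidean_space \<Rightarrow> 'a"
  assumes "orthogonal_transformation f"
  shows "continuous_on S f"
proof -
  have "linear f"
    using assms by (rule orthogonal_transformation_linear)
  then show ?thesis
    by (simp add: linear_conv_bounded_linear linear_continuous_on)
qed

lemma distr_lborel_orthogonal_transformation:
  fixes f :: "real^'n::{finite,wellorder} \<Rightarrow> real^'n::_"
  assumes f: "orthogonal_transformation f"
  shows "distr lborel borel f = lborel"
proof (rule lborel_eqI[symmetric])
  have cont: "continuous_on UNIV f"
    using f by (rule continuous_on_orthogonal_transformation)
  then have [measurable]: "f \<in> borel_measurable borel"
    by (rule borel_measurable_continuous_onI)
  show "sets (distr lborel borel f) = sets borel" by simp
  fix l u :: "(real, 'n) vec"
  assume le: "\<And>b. b \<in> Basis \<Longrightarrow> l \<bullet> b \<le> u \<bullet> b"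
  have g: "orthogonal_transformation (inv f)"
    using f by (rule orthogonal_transformation_inv)
  have pre: "f -` box l u = inv f ` box l u"
    using orthogonal_transformation_bij[OF f] by (simp add: bij_vimage_eq_inv_image)
  have "bounded (f -` box l u)"
    unfolding pre using g
    by (intro bounded_linear_image) (auto simp: orthogonal_transformation_linear linear_linear)
  then have "emeasure (distr lborel borel f) (box l u) = ennreal (measure lborel (f -` box l u))"
    by (subst emeasure_distr) (auto simp: emeasure_lborel_bounded_eq_measure)
  also have "measure lborel (f -` box l u) = measure lebesgue (inv f ` box l u)"
  proof -
    have "open (f -` box l u)"
      using cont by (simp add: continuous_on_open_vimage open_box)
    then show ?thesis
      using pre by simp
  qed
  also have "\<dots> = measure lborel (box l u)"
    using g by (subst measure_orthogonal_image) auto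
  finally show "emeasure (distr lborel borel f) (box l u) = (\<Prod>b\<in>Basis. (u - l) \<bullet> b)"
    using le by (simp add: emeasure_lborel_bounded_eq_measure[symmetric] emeasure_lborel_box_eq)
qed

lemma nn_integral_lborel_orthogonal_transformation:
  fixes f :: "real^'n::{finite,wellorder} \<Rightarrow> real^'n::_"
  assumes f: "orthogonal_transformation f" and [measurable]: "\<phi> \<in> borel_measurable borel"
  shows "(\<integral>\<^sup>+x. \<phi> x \<partial>lborel) = (\<integral>\<^sup>+x. \<phi> (f x) \<partial>lborel)"
proof -
  have [measurable]: "f \<in> borel_measurable borel"
    using f by (intro borel_measurable_continuous_onI continuous_on_orthogonal_transformation)
  show ?thesis
    by (subst (1) distr_lborel_orthogonal_transformation[OF f, symmetric])
      (simp add: nn_integral_distr)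
qed

lemma nn_integral_lborel_translate:
  fixes c :: "'a::euclidean_space"
  assumes [measurable]: "g \<in> borel_measurable borel"
  shows "(\<integral>\<^sup>+x. g x \<partial>lborel) = (\<integral>\<^sup>+x. g (c + x) \<partial>lborel)"
  by (subst (1) lborel_distr_plus[of c, symmetric]) (simp add: nn_integral_distr)

section \<open>Gaussian integrals\<close>

lemma nn_integral_exp_minus_pi_square: "(\<integral>\<^sup>+x. ennreal (exp (- pi * x\<^sup>2)) \<partial>lborel) = 1"
proof -
  define \<sigma> where "\<sigma> = 1 / sqrt (2 * pi)"
  have "\<sigma> > 0" and "\<sigma>\<^sup>2 = 1 / (2 * pi)"
    by (simp_all add: \<sigma>_def power_divide)
  then have density: "normal_density 0 \<sigma> x = exp (- pi * x\<^sup>2)" for x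
    by (simp add: normal_density_def field_simps)
  interpret prob_space "density lborel (normal_density 0 \<sigma>)"
    using \<open>\<sigma> > 0\<close> by (rule prob_space_normal_density)
  show ?thesis
    using emeasure_space_1 by (simp add: emeasure_density density)
qed

lemma exp_minus_pi_norm_square_eq_prod:
  fixes c :: "'a::euclidean_space"
  shows "exp (- pi * (norm c)\<^sup>2) = (\<Prod>b\<in>Basis. exp (- pi * (c \<bullet> b)\<^sup>2))"
proof -
  have "(norm c)\<^sup>2 = (\<Sum>b\<in>Basis. (c \<bullet> b)\<^sup>2)"
    unfolding power2_norm_eq_inner by (subst euclidean_inner) (simp add: power2_eq_square)
  then show ?thesis
    by (simp add: sum_distrib_left exp_sum)
qed

lemma nn_integral_gaussian_halfspace:
  fixes e :: "'a::euclidean_space"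
  assumes e: "e \<in> Basis"
  shows "(\<integral>\<^sup>+c. ennreal (exp (- pi * (norm c)\<^sup>2)) * indicator {c. t < c \<bullet> e} c \<partial>lborel)
    = (\<integral>\<^sup>+x. ennreal (exp (- pi * x\<^sup>2)) * indicator {t<..} x \<partial>lborel)"
proof -
  define F where "F b x = ennreal (exp (- pi * x\<^sup>2)) * (if b = e then indicator {t<..} x else 1)"
    for b and x :: real
  have [measurable]: "F b \<in> borel_measurable borel" for b
    unfolding F_def by measurable
  have prod: "ennreal (exp (- pi * (norm c)\<^sup>2)) * indicator {c. t < c \<bullet> e} c = (\<Prod>b\<in>Basis. F b (c \<bullet> b))"
    for c :: 'a
  proof -
    have "(\<Prod>b\<in>Basis. F b (c \<bullet> b))
        = (\<Prod>b\<in>Basis. ennreal (exp (- pi * (c \<bullet> b)\<^sup>2))) * (\<Prod>b\<in>Basis. if b = e then indicator {t<..} (c \<bullet> b) else 1)"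
      unfolding F_def by (rule prod.distrib)
    also have "(\<Prod>b\<in>Basis. if b = e then indicator {t<..} (c \<bullet> b) else 1) = (indicator {t<..} (c \<bullet> e) :: ennreal)"
      using e by simp
    finally show ?thesis
      using exp_minus_pi_norm_square_eq_prod[of c] by (simp add: prod_ennreal indicator_def)
  qed
  have "(\<integral>\<^sup>+c. ennreal (exp (- pi * (norm c)\<^sup>2)) * indicator {c. t < c \<bullet> e} c \<partial>lborel)
      = (\<Prod>b\<in>Basis. (\<integral>\<^sup>+x. F b x \<partial>lborel))"
    unfolding prod by (rule nn_integral_lborel_prod) auto
  also have "\<dots> = (\<integral>\<^sup>+x. F e x \<partial>lborel) * (\<Prod>b\<in>Basis - {e}. (\<integral>\<^sup>+x. F b x \<partial>lborel))"
    using e by (simp add: prod.remove)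
  also have "(\<Prod>b\<in>Basis - {e}. (\<integral>\<^sup>+x. F b x \<partial>lborel)) = 1"
    using nn_integral_exp_minus_pi_square by (intro prod.neutral) (simp add: F_def)
  finally show ?thesis
    by (simp add: F_def)
qed

lemma erfc_nonneg: "0 \<le> erfc x"
  unfolding erfc_def set_lebesgue_integral_def
  by (auto intro!: integral_nonneg_AE split: split_indicator)

lemma erfc_measurable [measurable]: "erfc \<in> borel_measurable borel"
proof -
  have "erfc = (\<lambda>x. 2 / sqrt pi * (LINT t|lborel. of_bool (x < t) * exp (- t\<^sup>2)))"
    by (simp add: fun_eq_iff erfc_def set_lebesgue_integral_def indicator_def)
  also have "\<dots> \<in> borel_measurable borel"
    by measurable
  finally show ?thesis .
qed

lemma nn_integral_gaussian_tail:
  "(\<integral>\<^sup>+x. ennreal (exp (- pi * x\<^sup>2)) * indicator {t<..} x \<partial>lborel) = ennreal (erfc (sqrt pi * t) / 2)"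
proof -
  have "0 < sqrt pi" by simp
  have "integrable lborel (\<lambda>x. sqrt pi * normal_density 0 (1 / sqrt 2) x)"
    by (intro integrable_mult_right integrable_normal_density) simp
  then have "integrable lborel (\<lambda>x::real. exp (- x\<^sup>2))"
    by (simp add: normal_density_def power_divide real_sqrt_mult)
  then have tail: "integrable lborel (\<lambda>x. indicator {sqrt pi * t<..} x *\<^sub>R exp (- x\<^sup>2))"
    by (rule integrable_mult_indicator[rotated]) simp
  have "(\<integral>\<^sup>+x. ennreal (exp (- pi * x\<^sup>2)) * indicator {t<..} x \<partial>lborel)
      = ennreal \<bar>1 / sqrt pi\<bar> * (\<integral>\<^sup>+x. ennreal (exp (- pi * (0 + 1 / sqrt pi * x)\<^sup>2)) * indicator {t<..} (0 + 1 / sqrt pi * x) \<partial>lborel)"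
    by (rule nn_integral_real_affine) auto
  also have "(\<integral>\<^sup>+x. ennreal (exp (- pi * (0 + 1 / sqrt pi * x)\<^sup>2)) * indicator {t<..} (0 + 1 / sqrt pi * x) \<partial>lborel)
      = (\<integral>\<^sup>+x. ennreal (indicator {sqrt pi * t<..} x *\<^sub>R exp (- x\<^sup>2)) \<partial>lborel)"
  proof (rule nn_integral_cong)
    fix x :: real
    have "pi * (0 + 1 / sqrt pi * x)\<^sup>2 = x\<^sup>2" and "t < 0 + 1 / sqrt pi * x \<longleftrightarrow> sqrt pi * t < x"
      using \<open>0 < sqrt pi\<close> by (auto simp: field_simps)
    then show "ennreal (exp (- pi * (0 + 1 / sqrt pi * x)\<^sup>2)) * indicator {t<..} (0 + 1 / sqrt pi * x)
        = ennreal (indicator {sqrt pi * t<..} x *\<^sub>R exp (- x\<^sup>2))"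
      by (simp add: indicator_def)
  qed
  also have "\<dots> = ennreal (LBINT x:{sqrt pi * t<..}. exp (- x\<^sup>2))"
    unfolding set_lebesgue_integral_def by (rule nn_integral_eq_integral[OF tail]) auto
  also have "ennreal \<bar>1 / sqrt pi\<bar> * \<dots> = ennreal (erfc (sqrt pi * t) / 2)"
    using erfc_nonneg[of "sqrt pi * t"] by (simp add: erfc_def ennreal_mult'[symmetric])
  finally show ?thesis .
qed

text \<open>The points closer to \<open>- w\<close> than to the origin form a half-space at distance
  \<open>norm w / 2\<close> from the origin; by rotation invariance its Gaussian mass is a tail integral.\<close>

lemma nn_integral_gaussian_nearer:
  fixes w :: "real^'n::{finite,wellorder}"
  assumes "w \<noteq> 0"
  shows "(\<integral>\<^sup>+c. ennreal (exp (- pi * (norm c)\<^sup>2)) * indicator {c. norm (c + w) < norm c} c \<partial>lborel)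
    = ennreal (erfc (sqrt pi * norm w / 2) / 2)"
proof -
  obtain e :: "(real, 'n) vec" where e: "e \<in> Basis"
    using nonempty_Basis by blast
  define a where "a = (- norm w) *\<^sub>R e"
  obtain f where f: "orthogonal_transformation f" and fa: "f a = w"
    using orthogonal_transformation_exists[of a w] e by (auto simp: a_def)
  have halfspace: "norm (f c + w) < norm (f c) \<longleftrightarrow> norm w / 2 < c \<bullet> e" for c
  proof -
    have "c \<bullet> a = - norm w * (c \<bullet> e)" "a \<bullet> a = norm w * norm w"
      using e by (simp_all add: a_def)
    then have "(c + a) \<bullet> (c + a) = c \<bullet> c - 2 * norm w * (c \<bullet> e) + norm w * norm w"
      by (simp add: inner_add_left inner_add_right inner_commute[of a c])
    then have "norm (c + a) < norm c \<longleftrightarrow> norm w * norm w < norm w * (2 * (c \<bullet> e))"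
      unfolding norm_lt by linarith
    moreover have "norm (f c + w) = norm (c + a)"
      using f fa by (metis orthogonal_transformation_linear linear_add orthogonal_transformation_norm)
    moreover have "norm (f c) = norm c"
      using f by (rule orthogonal_transformation_norm)
    ultimately have "norm (f c + w) < norm (f c) \<longleftrightarrow> norm w * norm w < norm w * (2 * (c \<bullet> e))"
      by simp
    also have "\<dots> \<longleftrightarrow> norm w / 2 < c \<bullet> e"
      using assms by (simp add: mult.commute)
    finally show ?thesis .
  qed
  have "(\<integral>\<^sup>+c. ennreal (exp (- pi * (norm c)\<^sup>2)) * indicator {c. norm (c + w) < norm c} c \<partial>lborel)
      = (\<integral>\<^sup>+c. ennreal (exp (- pi * (norm (f c))\<^sup>2)) * indicator {c. norm (c + w) < norm c} (f c) \<partial>lborel)"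
    by (rule nn_integral_lborel_orthogonal_transformation[OF f]) measurable
  also have "\<dots> = (\<integral>\<^sup>+c. ennreal (exp (- pi * (norm c)\<^sup>2)) * indicator {c. norm w / 2 < c \<bullet> e} c \<partial>lborel)"
    using f halfspace by (intro nn_integral_cong) (simp add: orthogonal_transformation_norm indicator_def)
  also have "\<dots> = (\<integral>\<^sup>+x. ennreal (exp (- pi * x\<^sup>2)) * indicator {norm w / 2<..} x \<partial>lborel)"
    using e by (rule nn_integral_gaussian_halfspace)
  also have "\<dots> = ennreal (erfc (sqrt pi * (norm w / 2)) / 2)"
    by (rule nn_integral_gaussian_tail)
  finally show ?thesis
    by simp
qed

section \<open>The joint density of the two nearest points\<close>

definition nearest_pair_density :: "(real^2) \<times> (real^2) \<Rightarrow> ennreal" where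
  "nearest_pair_density p =
     ennreal (exp (- pi * (norm (snd p))\<^sup>2)) * indicator {p. norm (fst p) < norm (snd p)} p"

lemma nearest_pair_density_measurable [measurable]:
  "nearest_pair_density \<in> borel_measurable (lborel \<Otimes>\<^sub>M lborel)"
  unfolding nearest_pair_density_def by measurable

lemma nn_integral_nearest_pair_density: "(\<integral>\<^sup>+p. nearest_pair_density p \<partial>(lborel \<Otimes>\<^sub>M lborel)) = 1"
proof -
  have inner: "(\<integral>\<^sup>+b. nearest_pair_density (b, c) \<partial>lborel) = ennreal (exp (- pi * (norm c)\<^sup>2) * (pi * (norm c)\<^sup>2))"
    for c :: "real^2"
  proof -
    have "(\<integral>\<^sup>+b. nearest_pair_density (b, c) \<partial>lborel)
        = (\<integral>\<^sup>+b. ennreal (exp (- pi * (norm c)\<^sup>2)) * indicator (ball 0 (norm c)) b \<partial>(lborel :: (real^2) measure))"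
      by (auto intro!: nn_integral_cong simp: nearest_pair_density_def indicator_def)
    also have "\<dots> = ennreal (exp (- pi * (norm c)\<^sup>2)) * emeasure lborel (ball (0::real^2) (norm c))"
      by (rule nn_integral_cmult_indicator) auto
    finally show ?thesis
      by (simp add: emeasure_ball_real2 ennreal_mult')
  qed
  have "(\<integral>\<^sup>+p. nearest_pair_density p \<partial>(lborel \<Otimes>\<^sub>M lborel))
      = (\<integral>\<^sup>+c. ennreal (exp (- pi * (norm c)\<^sup>2) * (pi * (norm c)\<^sup>2)) \<partial>(lborel :: (real^2) measure))"
    by (subst lborel_pair.nn_integral_snd[symmetric]) (auto simp: inner)
  also have "\<dots> = (\<integral>\<^sup>+r. ennreal (2 * pi\<^sup>2 * r ^ 3 * exp (- pi * r\<^sup>2)) * indicator {0..} r \<partial>lborel)"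
    by (subst nn_integral_norm_real2[where \<phi>="\<lambda>r. ennreal (exp (- pi * r\<^sup>2) * (pi * r\<^sup>2))"])
      (auto intro!: nn_integral_cong simp: ennreal_mult'[symmetric] power2_eq_square power3_eq_cube mult_ac
        split: split_indicator)
  also have "\<dots> = 0 - (- (1 + pi * 0\<^sup>2) * exp (- pi * 0\<^sup>2))"
  proof (rule nn_integral_FTC_atLeast[where F="\<lambda>r. - (1 + pi * r\<^sup>2) * exp (- pi * r\<^sup>2)"])
    show "(\<lambda>r. 2 * pi\<^sup>2 * r ^ 3 * exp (- pi * r\<^sup>2)) \<in> borel_measurable borel"
      by measurable
    show "DERIV (\<lambda>r. - (1 + pi * r\<^sup>2) * exp (- pi * r\<^sup>2)) x :> 2 * pi\<^sup>2 * x ^ 3 * exp (- pi * x\<^sup>2)" for x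
      by (rule derivative_eq_intros refl | simp)+ (simp add: algebra_simps power2_eq_square power3_eq_cube)
    show "((\<lambda>r. - (1 + pi * r\<^sup>2) * exp (- pi * r\<^sup>2)) \<longlongrightarrow> 0) at_top"
      by real_asymp
  qed simp
  finally show ?thesis
    by simp
qed

lemma nn_integral_nearest_pair_density_norm_diff:
  assumes [measurable]: "\<phi> \<in> borel_measurable borel"
  shows "(\<integral>\<^sup>+p. nearest_pair_density p * \<phi> (norm (fst p - snd p)) \<partial>(lborel \<Otimes>\<^sub>M lborel))
    = (\<integral>\<^sup>+r. ennreal (2 * pi * r) * indicator {0..} r * (ennreal (erfc (sqrt pi * r / 2) / 2) * \<phi> r) \<partial>lborel)"
proof -
  define K where "K w c = ennreal (exp (- pi * (norm c)\<^sup>2)) * indicator {c. norm (c + w) < norm c} c * \<phi> (norm w)"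
    for w c :: "real^2"
  have [measurable]: "case_prod K \<in> borel_measurable (lborel \<Otimes>\<^sub>M lborel)"
    unfolding K_def by measurable
  have "(\<integral>\<^sup>+p. nearest_pair_density p * \<phi> (norm (fst p - snd p)) \<partial>(lborel \<Otimes>\<^sub>M lborel))
      = (\<integral>\<^sup>+c. (\<integral>\<^sup>+b. nearest_pair_density (b, c) * \<phi> (norm (b - c)) \<partial>lborel) \<partial>lborel)"
    by (subst lborel_pair.nn_integral_snd[symmetric]) auto
  also have "\<dots> = (\<integral>\<^sup>+c. (\<integral>\<^sup>+w. K w c \<partial>lborel) \<partial>lborel)"
  proof (rule nn_integral_cong)
    fix c :: "real^2"
    have "(\<integral>\<^sup>+b. nearest_pair_density (b, c) * \<phi> (norm (b - c)) \<partial>lborel)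
        = (\<integral>\<^sup>+w. nearest_pair_density (c + w, c) * \<phi> (norm ((c + w) - c)) \<partial>lborel)"
      by (rule nn_integral_lborel_translate) measurable
    then show "(\<integral>\<^sup>+b. nearest_pair_density (b, c) * \<phi> (norm (b - c)) \<partial>lborel) = (\<integral>\<^sup>+w. K w c \<partial>lborel)"
      by (simp add: K_def nearest_pair_density_def indicator_def add.commute)
  qed
  also have "\<dots> = (\<integral>\<^sup>+w. (\<integral>\<^sup>+c. K w c \<partial>lborel) \<partial>lborel)"
    by (rule lborel_pair.Fubini') measurable
  also have "\<dots> = (\<integral>\<^sup>+w. ennreal (erfc (sqrt pi * norm w / 2) / 2) * \<phi> (norm w) \<partial>(lborel :: (real^2) measure))"
  proof (rule nn_integral_cong_AE)
    show "AE w in lborel. (\<integral>\<^sup>+c. K w c \<partial>lborel) = ennreal (erfc (sqrt pi * norm w / 2) / 2) * \<phi> (norm w)"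
      using AE_lborel_singleton[of "0::real^2"]
    proof eventually_elim
      case (elim w)
      have "(\<integral>\<^sup>+c. K w c \<partial>lborel)
          = (\<integral>\<^sup>+c. ennreal (exp (- pi * (norm c)\<^sup>2)) * indicator {c. norm (c + w) < norm c} c \<partial>lborel) * \<phi> (norm w)"
        unfolding K_def by (rule nn_integral_multc) measurable
      with nn_integral_gaussian_nearer[OF elim] show ?case
        by simp
    qed
  qed
  also have "\<dots> = (\<integral>\<^sup>+r. ennreal (2 * pi * r) * indicator {0..} r * (ennreal (erfc (sqrt pi * r / 2) / 2) * \<phi> r) \<partial>lborel)"
    by (rule nn_integral_norm_real2) measurable
  finally show ?thesis .
qed

lemma distr_nearest_pair_density_norm_diff:
  "distr (density (lborel \<Otimes>\<^sub>M lborel) nearest_pair_density) lborel (\<lambda>p. norm (fst p - snd p))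
    = density lborel (\<lambda>x. ennreal (if 0 < x then pi * x * erfc (sqrt pi * x / 2) else 0))"
  (is "?D = density lborel ?g")
proof (rule measure_eqI)
  fix A assume "A \<in> sets ?D"
  then have [measurable]: "A \<in> sets borel"
    by simp
  have radial: "ennreal (2 * pi * r) * indicator {0..} r * ennreal (erfc (sqrt pi * r / 2) / 2) = ?g r" for r
    using erfc_nonneg[of "sqrt pi * r / 2"]
    by (cases "0 < r") (auto simp: ennreal_mult'[symmetric] indicator_def)
  have preimage: "(\<lambda>p. norm (fst p - snd p)) -` A \<inter> space (lborel \<Otimes>\<^sub>M lborel) \<in> sets (lborel \<Otimes>\<^sub>M lborel)"
    by measurable
  have "emeasure ?D A = emeasure (density (lborel \<Otimes>\<^sub>M lborel) nearest_pair_density)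
      ((\<lambda>p. norm (fst p - snd p)) -` A \<inter> space (lborel \<Otimes>\<^sub>M lborel))"
    by (subst emeasure_distr) auto
  also have "\<dots> = (\<integral>\<^sup>+p. nearest_pair_density p * indicator A (norm (fst p - snd p)) \<partial>(lborel \<Otimes>\<^sub>M lborel))"
    unfolding emeasure_density[OF nearest_pair_density_measurable preimage]
    by (auto intro!: nn_integral_cong simp: indicator_def space_pair_measure)
  also have "\<dots> = (\<integral>\<^sup>+r. ?g r * indicator A r \<partial>lborel)"
    by (simp add: nn_integral_nearest_pair_density_norm_diff radial mult.assoc[symmetric])
  also have "\<dots> = emeasure (density lborel ?g) A"
    by (simp add: emeasure_density)
  finally show "emeasure ?D A = emeasure (density lborel ?g) A" .
qed simp

lemma nearest_two_eq_if_ball_eq: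
  assumes nearest: "nearest_two Y b c" and ball: "Y \<inter> ball 0 r = {u, v}" and uv: "norm u < norm v"
  shows "b = u \<and> c = v"
proof -
  from nearest have "b \<in> Y" "c \<in> Y" "b \<noteq> c" "norm b \<le> norm c"
    and beyond: "\<And>p. p \<in> Y - {b, c} \<Longrightarrow> norm c \<le> norm p"
    unfolding nearest_two_def by auto
  have "u \<in> Y \<inter> ball 0 r" "v \<in> Y \<inter> ball 0 r"
    using ball by blast+
  then have "u \<in> Y" "v \<in> Y" "norm u < r" "norm v < r"
    by simp_all
  have "norm c < r"
  proof (rule ccontr)
    assume far: "\<not> norm c < r"
    have near_b: "p = b" if "p \<in> Y" "norm p < r" for p
    proof (rule ccontr)
      assume "p \<noteq> b"
      moreover have "p \<noteq> c"
        using far that(2) by auto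
      ultimately have "norm c \<le> norm p"
        using beyond that(1) by blast
      with far that(2) show False
        by linarith
    qed
    have "u = b" "v = b"
      using near_b \<open>u \<in> Y\<close> \<open>v \<in> Y\<close> \<open>norm u < r\<close> \<open>norm v < r\<close> by blast+
    with uv show False
      by simp
  qed
  then have "b \<in> Y \<inter> ball 0 r" "c \<in> Y \<inter> ball 0 r"
    using \<open>b \<in> Y\<close> \<open>c \<in> Y\<close> \<open>norm b \<le> norm c\<close> by simp_all
  then have "b \<in> {u, v}" "c \<in> {u, v}"
    using ball by blast+
  with \<open>b \<noteq> c\<close> \<open>norm b \<le> norm c\<close> uv show ?thesis
    by auto
qed

lemma nearest_two_in_sets:
  assumes "nearest_two Y b c"
    and "Y \<inter> U = {u}" "Y \<inter> V = {v}" "Y \<inter> (ball 0 \<sigma> - U - V) = {}"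
    and U: "U \<subseteq> ball 0 \<rho>" and V: "V \<subseteq> {v. \<rho> \<le> norm v \<and> norm v < \<sigma>}"
  shows "b \<in> U \<and> c \<in> V"
proof -
  have "u \<in> U" "v \<in> V" "norm u < \<rho>" "\<rho> \<le> norm v" "norm v < \<sigma>"
    using assms(2,3) U V by auto
  have "U \<subseteq> ball 0 \<sigma>" "V \<subseteq> ball 0 \<sigma>"
    using U V \<open>\<rho> \<le> norm v\<close> \<open>norm v < \<sigma>\<close> by fastforce+
  then have "Y \<inter> ball 0 \<sigma> = (Y \<inter> U) \<union> (Y \<inter> V) \<union> (Y \<inter> (ball 0 \<sigma> - U - V))"
    by blast
  then have "Y \<inter> ball 0 \<sigma> = {u, v}"
    using assms(2-4) by (simp add: insert_commute)
  with assms(1) \<open>norm u < \<rho>\<close> \<open>\<rho> \<le> norm v\<close> have "b = u \<and> c = v"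
    by (intro nearest_two_eq_if_ball_eq) auto
  with \<open>u \<in> U\<close> \<open>v \<in> V\<close> show ?thesis
    by simp
qed

section \<open>Discretising the distance of the second point\<close>

definition shell :: "real \<Rightarrow> nat \<Rightarrow> 'a::real_normed_vector set" where
  "shell m k = {c. real k / m \<le> norm c \<and> norm c < (real k + 1) / m}"

definition shell_index :: "real \<Rightarrow> 'a::real_normed_vector \<Rightarrow> nat" where
  "shell_index m c = nat \<lfloor>m * norm c\<rfloor>"

lemma shell_borel [measurable]: "shell m k \<in> sets borel"
  unfolding shell_def by measurable

lemma mem_shell_iff:
  assumes "0 < m"
  shows "c \<in> shell m k \<longleftrightarrow> shell_index m c = k"
proof -
  have "c \<in> shell m k \<longleftrightarrow> real k \<le> m * norm c \<and> m * norm c < real k + 1"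
    using assms by (simp add: shell_def field_simps)
  also have "\<dots> \<longleftrightarrow> \<lfloor>m * norm c\<rfloor> = int k"
    by (simp add: floor_eq_iff)
  finally show ?thesis
    using assms by (auto simp: shell_index_def)
qed

lemma shell_index_bounds:
  assumes "0 < m"
  shows "real (shell_index m c) / m \<le> norm c" "norm c < real (shell_index m c) / m + 1 / m"
  using mem_shell_iff[OF assms, of c "shell_index m c"] by (simp_all add: shell_def add_divide_distrib)

lemma tendsto_shell_radius:
  "(\<lambda>n. real (shell_index (real (Suc n)) c) / real (Suc n)) \<longlonglongrightarrow> norm c"
proof (rule tendsto_sandwich[where f="\<lambda>n. norm c - 1 / real (Suc n)" and h="\<lambda>n. norm c"])
  have "norm c - 1 / real (Suc n) \<le> real (shell_index (real (Suc n)) c) / real (Suc n)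
      \<and> real (shell_index (real (Suc n)) c) / real (Suc n) \<le> norm c" for n
  proof -
    have "0 < real (Suc n)"
      by simp
    from shell_index_bounds[OF this, of c] show ?thesis
      by linarith
  qed
  then show "\<forall>\<^sub>F n in sequentially. norm c - 1 / real (Suc n) \<le> real (shell_index (real (Suc n)) c) / real (Suc n)"
    "\<forall>\<^sub>F n in sequentially. real (shell_index (real (Suc n)) c) / real (Suc n) \<le> norm c"
    by (auto intro!: always_eventually)
  show "(\<lambda>n. norm c - 1 / real (Suc n)) \<longlonglongrightarrow> norm c"
    using tendsto_diff[OF tendsto_const LIMSEQ_inverse_real_of_nat, of "norm c"] by (simp add: inverse_eq_divide)
qed simp

text \<open>A lower step approximation of \<open>nearest_pair_density\<close> on \<open>U \<times> V\<close>: on the \<open>k\<close>-th shell of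
  width \<open>1 / m\<close> the factor \<open>exp (- pi * norm c\<^sup>2)\<close> is replaced by its value on the outer rim and
  the condition \<open>norm b < norm c\<close> by \<open>norm b < k / m\<close>.\<close>

definition shell_approx :: "real \<Rightarrow> (real^2) set \<Rightarrow> (real^2) set \<Rightarrow> (real^2) \<times> (real^2) \<Rightarrow> ennreal" where
  "shell_approx m U V p =
     (\<Sum>k. ennreal (exp (- pi * ((real k + 1) / m)\<^sup>2)) * indicator ((ball 0 (real k / m) \<inter> U) \<times> (shell m k \<inter> V)) p)"

lemma shell_approx_measurable:
  assumes [measurable]: "U \<in> sets borel" "V \<in> sets borel"
  shows "shell_approx m U V \<in> borel_measurable (lborel \<Otimes>\<^sub>M lborel)"
  unfolding shell_approx_def[abs_def]
  by (intro borel_measurable_suminf_order borel_measurable_times_ennreal borel_measurable_indicator)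
    auto

lemma nn_integral_shell_approx:
  assumes [measurable]: "U \<in> sets borel" "V \<in> sets borel"
  shows "(\<integral>\<^sup>+p. shell_approx m U V p \<partial>(lborel \<Otimes>\<^sub>M lborel)) =
    (\<Sum>k. ennreal (exp (- pi * ((real k + 1) / m)\<^sup>2))
       * emeasure lborel (ball 0 (real k / m) \<inter> U) * emeasure lborel (shell m k \<inter> V))"
proof -
  have rect: "(ball 0 (real k / m) \<inter> U) \<times> (shell m k \<inter> V) \<in> sets (lborel \<Otimes>\<^sub>M lborel)" for k
    by (intro pair_measureI) auto
  then show ?thesis
    unfolding shell_approx_def
    by (subst nn_integral_suminf)
      (auto simp: nn_integral_cmult_indicator lborel.emeasure_pair_measure_Times mult.assoc)
qed

lemma shell_approx_Pair:
  assumes "0 < m"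
  shows "shell_approx m U V (b, c) = ennreal (exp (- pi * ((real (shell_index m c) + 1) / m)\<^sup>2))
    * indicator (ball 0 (real (shell_index m c) / m) \<inter> U) b * indicator V c"
proof -
  let ?k = "shell_index m c"
  have "shell_approx m U V (b, c) = (\<Sum>k. if k = ?k then ennreal (exp (- pi * ((real k + 1) / m)\<^sup>2))
      * indicator (ball 0 (real k / m) \<inter> U) b * indicator V c else 0)"
    unfolding shell_approx_def
    by (intro suminf_cong) (auto simp: mem_shell_iff[OF assms] indicator_def)
  also have "\<dots> = ennreal (exp (- pi * ((real ?k + 1) / m)\<^sup>2)) * indicator (ball 0 (real ?k / m) \<inter> U) b * indicator V c"
    by (rule sums_unique[symmetric]) (rule sums_single)
  finally show ?thesis .
qed

lemma nearest_pair_density_le_liminf_shell_approx: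
  "nearest_pair_density p * indicator (U \<times> V) p \<le> liminf (\<lambda>n. shell_approx (real (Suc n)) U V p)"
proof (cases p)
  case (Pair b c)
  show ?thesis
  proof (cases "b \<in> U \<and> c \<in> V \<and> norm b < norm c")
    case False
    then show ?thesis
      using Pair by (auto simp: nearest_pair_density_def indicator_def)
  next
    case True
    define r where "r n = real (shell_index (real (Suc n)) c) / real (Suc n)" for n
    have "r \<longlonglongrightarrow> norm c"
      unfolding r_def by (rule tendsto_shell_radius)
    then have outer: "(\<lambda>n. r n + inverse (real (Suc n))) \<longlonglongrightarrow> norm c"
      using tendsto_add[OF \<open>r \<longlonglongrightarrow> norm c\<close> LIMSEQ_inverse_real_of_nat] by simp
    have "(\<lambda>n. exp (- pi * (r n + inverse (real (Suc n)))\<^sup>2)) \<longlonglongrightarrow> exp (- pi * (norm c)\<^sup>2)"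
      by (intro tendsto_intros outer)
    then have lim: "(\<lambda>n. ennreal (exp (- pi * (r n + inverse (real (Suc n)))\<^sup>2)))
        \<longlonglongrightarrow> nearest_pair_density p * indicator (U \<times> V) p"
      using True Pair by (simp add: nearest_pair_density_def)
    have "\<forall>\<^sub>F n in sequentially. norm b < r n"
      using True \<open>r \<longlonglongrightarrow> norm c\<close> by (intro order_tendstoD) auto
    then have "\<forall>\<^sub>F n in sequentially.
        ennreal (exp (- pi * (r n + inverse (real (Suc n)))\<^sup>2)) = shell_approx (real (Suc n)) U V p"
      by eventually_elim
        (use True Pair in \<open>simp add: shell_approx_Pair r_def add_divide_distrib inverse_eq_divide\<close>)
    with lim have "(\<lambda>n. shell_approx (real (Suc n)) U V p) \<longlonglongrightarrow> nearest_pair_density p * indicator (U \<times> V) p"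
      by (rule Lim_transform_eventually)
    then show ?thesis
      by (simp add: lim_imp_Liminf)
  qed
qed

section \<open>The law of the two nearest points of a Poisson process\<close>

context
  fixes M :: "'a measure" and X :: "'a \<Rightarrow> (real^2) set"
  assumes poisson: "unit_poisson_process M X"
begin

interpretation prob_space M
  using poisson by (simp add: unit_poisson_process_def)

lemma prob_counts_one_one_zero:
  assumes sets: "U \<in> sets borel" "V \<in> sets borel" "W \<in> sets borel"
    and bounded: "bounded U" "bounded V" "bounded W"
    and disjoint: "U \<inter> V = {}" "U \<inter> W = {}" "V \<inter> W = {}"
    and nonempty: "U \<noteq> {}" "V \<noteq> {}"
  shows "prob {\<omega> \<in> space M. card (X \<omega> \<inter> U) = 1 \<and> card (X \<omega> \<inter> V) = 1 \<and> card (X \<omega> \<inter> W) = 0}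
    = measure lborel U * measure lborel V * exp (- (measure lborel U + measure lborel V + measure lborel W))"
proof -
  define \<S> where "\<S> = {U, V, W}"
  define k where "k S = (if S = W then 0 else 1 :: nat)" for S
  have "U \<noteq> V" "U \<noteq> W" "V \<noteq> W"
    using disjoint nonempty by auto
  have "\<S> \<subseteq> sets borel" "\<forall>S\<in>\<S>. bounded S"
    using sets bounded by (auto simp: \<S>_def)
  moreover have "finite \<S>" "disjoint \<S>"
    using disjoint by (auto simp: \<S>_def disjoint_def)
  ultimately have counts: "indep_vars (\<lambda>_. count_space UNIV) (\<lambda>S \<omega>. card (X \<omega> \<inter> S)) \<S>"
    and poisson_law: "\<And>S. S \<in> \<S> \<Longrightarrow> prob {\<omega> \<in> space M. card (X \<omega> \<inter> S) = k S}
      = measure lborel S ^ k S / fact (k S) * exp (- measure lborel S)"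
    using poisson by (auto simp: unit_poisson_process_def)
  have "{\<omega> \<in> space M. card (X \<omega> \<inter> U) = 1 \<and> card (X \<omega> \<inter> V) = 1 \<and> card (X \<omega> \<inter> W) = 0}
      = (\<Inter>S\<in>\<S>. (\<lambda>\<omega>. card (X \<omega> \<inter> S)) -` {k S} \<inter> space M)"
    using \<open>U \<noteq> W\<close> \<open>V \<noteq> W\<close> by (auto simp: \<S>_def k_def)
  also have "prob \<dots> = (\<Prod>S\<in>\<S>. prob ((\<lambda>\<omega>. card (X \<omega> \<inter> S)) -` {k S} \<inter> space M))"
    by (rule indep_varsD_finite[OF counts]) (auto simp: \<S>_def)
  also have "\<dots> = (\<Prod>S\<in>\<S>. measure lborel S ^ k S / fact (k S) * exp (- measure lborel S))"
    using poisson_law by (intro prod.cong) (auto simp: vimage_def Int_def conj_commute)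
  also have "\<dots> = measure lborel U * measure lborel V * exp (- (measure lborel U + measure lborel V + measure lborel W))"
    using \<open>U \<noteq> V\<close> \<open>U \<noteq> W\<close> \<open>V \<noteq> W\<close> by (simp add: \<S>_def k_def exp_add[symmetric] exp_diff algebra_simps)
  finally show ?thesis .
qed

context
  fixes B C :: "'a \<Rightarrow> real^2"
  assumes B: "B \<in> borel_measurable M" and C: "C \<in> borel_measurable M"
    and nearest: "AE \<omega> in M. nearest_two (X \<omega>) (B \<omega>) (C \<omega>)"
begin

lemma measurable_nearest_pair: "(\<lambda>\<omega>. (B \<omega>, C \<omega>)) \<in> measurable M (lborel \<Otimes>\<^sub>M lborel)"
  using B C by (simp add: measurable_Pair)

text \<open>Exactly one point in \<open>U\<close>, exactly one in \<open>V\<close> and none elsewhere in the disc of radius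
  \<open>\<sigma>\<close> forces \<open>B \<in> U\<close> and \<open>C \<in> V\<close>; the void probability of that disc is \<open>exp (- pi * \<sigma>\<^sup>2)\<close>.\<close>

lemma emeasure_nearest_pair_Times_ge:
  assumes [measurable]: "U \<in> sets borel" "V \<in> sets borel"
    and U: "U \<subseteq> ball 0 \<rho>" and V: "V \<subseteq> {v. \<rho> \<le> norm v \<and> norm v < \<sigma>}"
  shows "ennreal (exp (- pi * \<sigma>\<^sup>2)) * emeasure lborel U * emeasure lborel V
    \<le> emeasure (distr M (lborel \<Otimes>\<^sub>M lborel) (\<lambda>\<omega>. (B \<omega>, C \<omega>))) (U \<times> V)"
proof (cases "U = {} \<or> V = {}")
  case False
  then obtain v where "v \<in> V"
    by blast
  with V have "norm v < \<sigma>"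
    by auto
  then have "0 \<le> \<sigma>"
    using norm_ge_zero[of v] by linarith
  define W where "W = ball 0 \<sigma> - U - V"
  have "U \<subseteq> ball 0 \<sigma>" "V \<subseteq> ball 0 \<sigma>"
    using U V \<open>v \<in> V\<close> by fastforce+
  then have bounded: "bounded U" "bounded V" "bounded W"
    by (auto simp: W_def intro: bounded_subset[OF bounded_ball])
  have disjoint: "U \<inter> V = {}" "U \<inter> W = {}" "V \<inter> W = {}"
    using U V by (fastforce simp: W_def)+
  have "measure lborel U + measure lborel V + measure lborel W = measure lborel (ball (0::real^2) \<sigma>)"
    using \<open>U \<subseteq> ball 0 \<sigma>\<close> \<open>V \<subseteq> ball 0 \<sigma>\<close> bounded disjoint emeasure_bounded_finite
    by (subst measure_Union[symmetric] measure_Union[symmetric], auto simp: W_def less_top intro!: arg_cong[where f="measure lborel"])+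
  also have "\<dots> = pi * \<sigma>\<^sup>2"
    using emeasure_ball_real2[OF \<open>0 \<le> \<sigma>\<close>, of 0] \<open>0 \<le> \<sigma>\<close> by (simp add: measure_def)
  finally have mass: "measure lborel U + measure lborel V + measure lborel W = pi * \<sigma>\<^sup>2" .
  define E where "E = {\<omega> \<in> space M. card (X \<omega> \<inter> U) = 1 \<and> card (X \<omega> \<inter> V) = 1 \<and> card (X \<omega> \<inter> W) = 0}"
  have "prob E = measure lborel U * measure lborel V * exp (- (measure lborel U + measure lborel V + measure lborel W))"
    unfolding E_def using False bounded disjoint by (intro prob_counts_one_one_zero) (auto simp: W_def)
  then have "ennreal (exp (- pi * \<sigma>\<^sup>2)) * emeasure lborel U * emeasure lborel V = ennreal (prob E)"
    unfolding mass using bounded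
    by (simp add: emeasure_lborel_bounded_eq_measure ennreal_mult'[symmetric] mult_ac)
  also have "\<dots> = emeasure M E"
    by (simp add: emeasure_eq_measure)
  also have "\<dots> \<le> emeasure M ((\<lambda>\<omega>. (B \<omega>, C \<omega>)) -` (U \<times> V) \<inter> space M)"
  proof (rule emeasure_mono_AE)
    show "AE \<omega> in M. \<omega> \<in> E \<longrightarrow> \<omega> \<in> (\<lambda>\<omega>. (B \<omega>, C \<omega>)) -` (U \<times> V) \<inter> space M"
      using nearest
    proof eventually_elim
      case (elim \<omega>)
      show ?case
      proof
        assume "\<omega> \<in> E"
        then have "\<omega> \<in> space M" and counts: "card (X \<omega> \<inter> U) = 1" "card (X \<omega> \<inter> V) = 1" "card (X \<omega> \<inter> W) = 0"
          by (auto simp: E_def)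
        moreover have "finite (X \<omega> \<inter> W)"
          using poisson \<open>\<omega> \<in> space M\<close> bounded(3) by (simp add: unit_poisson_process_def)
        moreover obtain u v where "X \<omega> \<inter> U = {u}" "X \<omega> \<inter> V = {v}"
          using counts by (metis card_1_singletonE)
        ultimately have "B \<omega> \<in> U \<and> C \<omega> \<in> V"
          using elim U V by (intro nearest_two_in_sets[where \<sigma>=\<sigma>]) (auto simp: W_def)
        with \<open>\<omega> \<in> space M\<close> show "\<omega> \<in> (\<lambda>\<omega>. (B \<omega>, C \<omega>)) -` (U \<times> V) \<inter> space M"
          by simp
      qed
    qed
    show "(\<lambda>\<omega>. (B \<omega>, C \<omega>)) -` (U \<times> V) \<inter> space M \<in> sets M"
      by (rule measurable_sets[OF measurable_nearest_pair]) auto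
  qed
  also have "\<dots> = emeasure (distr M (lborel \<Otimes>\<^sub>M lborel) (\<lambda>\<omega>. (B \<omega>, C \<omega>))) (U \<times> V)"
    by (subst emeasure_distr[OF measurable_nearest_pair]) auto
  finally show ?thesis .
qed auto

lemma nn_integral_shell_approx_le:
  assumes [measurable]: "U \<in> sets borel" "V \<in> sets borel" and "0 < m"
  shows "(\<integral>\<^sup>+p. shell_approx m U V p \<partial>(lborel \<Otimes>\<^sub>M lborel))
    \<le> emeasure (distr M (lborel \<Otimes>\<^sub>M lborel) (\<lambda>\<omega>. (B \<omega>, C \<omega>))) (U \<times> V)"
proof -
  let ?D = "distr M (lborel \<Otimes>\<^sub>M lborel) (\<lambda>\<omega>. (B \<omega>, C \<omega>))"
  define R where "R k = (ball 0 (real k / m) \<inter> U) \<times> (shell m k \<inter> V)" for k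
  have R: "R k \<in> sets ?D" for k
    by (auto simp: R_def)
  have "(\<integral>\<^sup>+p. shell_approx m U V p \<partial>(lborel \<Otimes>\<^sub>M lborel)) \<le> (\<Sum>k. emeasure ?D (R k))"
    unfolding nn_integral_shell_approx[OF assms(1,2)] R_def
    by (intro suminf_le emeasure_nearest_pair_Times_ge) (auto simp: shell_def)
  also have "\<dots> = emeasure ?D (\<Union>k. R k)"
    using R by (intro suminf_emeasure) (auto simp: disjoint_family_on_def R_def mem_shell_iff[OF \<open>0 < m\<close>])
  also have "\<dots> \<le> emeasure ?D (U \<times> V)"
    by (intro emeasure_mono) (auto simp: R_def)
  finally show ?thesis .
qed

lemma emeasure_density_nearest_pair_Times_le:
  assumes [measurable]: "U \<in> sets borel" "V \<in> sets borel"
  shows "emeasure (density (lborel \<Otimes>\<^sub>M lborel) nearest_pair_density) (U \<times> V)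
    \<le> emeasure (distr M (lborel \<Otimes>\<^sub>M lborel) (\<lambda>\<omega>. (B \<omega>, C \<omega>))) (U \<times> V)"
proof -
  let ?S = "\<lambda>n. shell_approx (real (Suc n)) U V"
  have "emeasure (density (lborel \<Otimes>\<^sub>M lborel) nearest_pair_density) (U \<times> V)
      = (\<integral>\<^sup>+p. nearest_pair_density p * indicator (U \<times> V) p \<partial>(lborel \<Otimes>\<^sub>M lborel))"
    by (intro emeasure_density) auto
  also have "\<dots> \<le> (\<integral>\<^sup>+p. liminf (\<lambda>n. ?S n p) \<partial>(lborel \<Otimes>\<^sub>M lborel))"
    by (intro nn_integral_mono nearest_pair_density_le_liminf_shell_approx)
  also have "\<dots> \<le> liminf (\<lambda>n. \<integral>\<^sup>+p. ?S n p \<partial>(lborel \<Otimes>\<^sub>M lborel))"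
    by (intro nn_integral_liminf shell_approx_measurable assms)
  also have "\<dots> \<le> limsup (\<lambda>n. \<integral>\<^sup>+p. ?S n p \<partial>(lborel \<Otimes>\<^sub>M lborel))"
    by (rule Liminf_le_Limsup) simp
  also have "\<dots> \<le> emeasure (distr M (lborel \<Otimes>\<^sub>M lborel) (\<lambda>\<omega>. (B \<omega>, C \<omega>))) (U \<times> V)"
    by (intro Limsup_bounded always_eventually allI nn_integral_shell_approx_le assms) simp
  finally show ?thesis .
qed

lemma distr_nearest_pair:
  "distr M (lborel \<Otimes>\<^sub>M lborel) (\<lambda>\<omega>. (B \<omega>, C \<omega>)) = density (lborel \<Otimes>\<^sub>M lborel) nearest_pair_density"
proof (rule measure_eqI_le_on_Times[where M=lborel and N=lborel, symmetric])
  let ?P = "density (lborel \<Otimes>\<^sub>M lborel) nearest_pair_density"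
  let ?Q = "distr M (lborel \<Otimes>\<^sub>M lborel) (\<lambda>\<omega>. (B \<omega>, C \<omega>))"
  have "emeasure ?P (space ?P) = 1"
    using emeasure_density[OF nearest_pair_density_measurable sets.top] nn_integral_nearest_pair_density
    by (simp add: space_pair_measure)
  moreover have "emeasure ?Q (space ?Q) = 1"
    using emeasure_distr[OF measurable_nearest_pair sets.top] by (simp add: space_pair_measure emeasure_space_1)
  ultimately show "emeasure ?Q (space ?Q) \<noteq> \<infinity>" "emeasure ?P (space ?P) = emeasure ?Q (space ?Q)"
    by simp_all
qed (auto intro: emeasure_density_nearest_pair_Times_le)

end

end

theorem mainTheorem2:
  fixes M :: "'a measure" and X :: "'a \<Rightarrow> (real^2) set" and B C :: "'a \<Rightarrow> real^2"
  assumes "unit_poisson_process M X"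
    and "B \<in> borel_measurable M" and "C \<in> borel_measurable M"
    and "AE \<omega> in M. nearest_two (X \<omega>) (B \<omega>) (C \<omega>)"
  shows "distributed M lborel (\<lambda>\<omega>. norm (B \<omega> - C \<omega>))
           (\<lambda>x. ennreal (if 0 < x then pi * x * erfc (sqrt pi * x / 2) else 0))"
proof -
  have pair: "(\<lambda>\<omega>. (B \<omega>, C \<omega>)) \<in> measurable M (lborel \<Otimes>\<^sub>M lborel)"
    using assms by (rule measurable_nearest_pair)
  have diff: "(\<lambda>p. norm (fst p - snd p)) \<in> measurable (lborel \<Otimes>\<^sub>M lborel) (lborel :: real measure)"
    by measurable
  have "distr M lborel (\<lambda>\<omega>. norm (B \<omega> - C \<omega>))
      = distr (distr M (lborel \<Otimes>\<^sub>M lborel) (\<lambda>\<omega>. (B \<omega>, C \<omega>))) lborel (\<lambda>p. norm (fst p - snd p))"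
    using distr_distr[OF diff pair] by (simp add: comp_def)
  also have "\<dots> = density lborel (\<lambda>x. ennreal (if 0 < x then pi * x * erfc (sqrt pi * x / 2) else 0))"
    using assms by (simp add: distr_nearest_pair distr_nearest_pair_density_norm_diff)
  finally show ?thesis
    using measurable_comp[OF pair diff] by (simp add: distributed_def comp_def)
qed

end
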